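(* Let $(b,c)$ be a connected weighted graph over $X$ with $c\equiv0$. Then, pointwise on $X\times X$, $$\varrho=\sup\{\sigma:\ \sigma \text{ is a pseudometric on }X\text{ intrinsic with respect to some measure } m \text{ on } X \text{ with } m(X)\le1\}.$$
   Context: Let $X$ be a countably infinite set. A weighted graph $(b,c)$ over $X$ consists of a symmetric $b:X\times X\to[0,\infty)$ with $b(x,x)=0$ and $\sum_{y}b(x,y)<\infty$ for all $x$, and $c:X\to[0,\infty)$. A path is a finite sequence of pairwise distinct vertices with $b(x_{i-1},x_i)>0$ for consecutive vertices; the graph is connected if any two distinct vertices are joined by a path. For $f:X\to\mathbb C$ let $\widetilde Q(f)=\frac12\sum_{x,y}b(x,y)|f(x)-f(y)|^2+\sum_x c(x)|f(x)|^2\in[0,\infty]$, $\widetilde D=\{f:\widetilde Q(f)<\infty\}$, and $\varrho(x,y)=\sup\{|f(x)-f(y)|:f\in\widetilde D,\ \widetilde Q(f)\le1\}$. A measure on $X$ is a function $m:X\to[0,\infty)$ with $m(A)=\sum_{x\in A}m(x)$. A pseudometric $\sigma$ on $X$ is intrinsic with respect to $m$ if $\frac12\sum_{y}b(x,y)\sigma(x,y)^2\le m(x)$ for all $x\in X$. *)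

theory Defs
  imports "HOL-Analysis.Analysis"
begin

definition weighted_graph :: "('a \<Rightarrow> 'a \<Rightarrow> real) \<Rightarrow> ('a \<Rightarrow> real) \<Rightarrow> bool" where
  "weighted_graph b c \<longleftrightarrow>
     (\<forall>x y. b x y = b y x) \<and> (\<forall>x y. 0 \<le> b x y) \<and> (\<forall>x. b x x = 0) \<and>
     (\<forall>x. (\<lambda>y. b x y) summable_on UNIV) \<and> (\<forall>x. 0 \<le> c x)"

definition is_path :: "('a \<Rightarrow> 'a \<Rightarrow> real) \<Rightarrow> 'a list \<Rightarrow> bool" where
  "is_path b p \<longleftrightarrow> p \<noteq> [] \<and> distinct p \<and>
     (\<forall>i. Suc i < length p \<longrightarrow> b (p ! i) (p ! Suc i) > 0)"

definition connected_graph :: "('a \<Rightarrow> 'a \<Rightarrow> real) \<Rightarrow> bool" where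
  "connected_graph b \<longleftrightarrow>
     (\<forall>x y. x \<noteq> y \<longrightarrow> (\<exists>p. is_path b p \<and> hd p = x \<and> last p = y))"

definition Qt :: "('a \<Rightarrow> 'a \<Rightarrow> real) \<Rightarrow> ('a \<Rightarrow> real) \<Rightarrow> ('a \<Rightarrow> complex) \<Rightarrow> ennreal" where
  "Qt b c f = (\<Sum>\<^sub>\<infinity>(x,y)\<in>UNIV. ennreal (b x y * (cmod (f x - f y))\<^sup>2)) / 2
              + (\<Sum>\<^sub>\<infinity>x\<in>UNIV. ennreal (c x * (cmod (f x))\<^sup>2))"

definition Dt :: "('a \<Rightarrow> 'a \<Rightarrow> real) \<Rightarrow> ('a \<Rightarrow> real) \<Rightarrow> ('a \<Rightarrow> complex) set" where
  "Dt b c = {f. Qt b c f < \<infinity>}"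

definition rho :: "('a \<Rightarrow> 'a \<Rightarrow> real) \<Rightarrow> ('a \<Rightarrow> real) \<Rightarrow> 'a \<Rightarrow> 'a \<Rightarrow> ereal" where
  "rho b c x y = Sup {ereal (cmod (f x - f y)) | f. f \<in> Dt b c \<and> Qt b c f \<le> 1}"

definition pseudometric :: "('a \<Rightarrow> 'a \<Rightarrow> real) \<Rightarrow> bool" where
  "pseudometric \<sigma> \<longleftrightarrow> (\<forall>x y. 0 \<le> \<sigma> x y) \<and> (\<forall>x. \<sigma> x x = 0) \<and>
     (\<forall>x y. \<sigma> x y = \<sigma> y x) \<and> (\<forall>x y z. \<sigma> x z \<le> \<sigma> x y + \<sigma> y z)"

definition is_measure_fn :: "('a \<Rightarrow> real) \<Rightarrow> bool" where
  "is_measure_fn m \<longleftrightarrow> (\<forall>x. 0 \<le> m x)"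

definition total_mass :: "('a \<Rightarrow> real) \<Rightarrow> ennreal" where
  "total_mass m = (\<Sum>\<^sub>\<infinity>x\<in>UNIV. ennreal (m x))"

definition intrinsic :: "('a \<Rightarrow> 'a \<Rightarrow> real) \<Rightarrow> ('a \<Rightarrow> 'a \<Rightarrow> real) \<Rightarrow> ('a \<Rightarrow> real) \<Rightarrow> bool" where
  "intrinsic b \<sigma> m \<longleftrightarrow>
     (\<forall>x. (\<Sum>\<^sub>\<infinity>y\<in>UNIV. ennreal (b x y * (\<sigma> x y)\<^sup>2)) / 2 \<le> ennreal (m x))"

end

theory Submission
  imports Defs
begin

text \<open>
  For a pseudometric \<open>\<sigma>\<close> let \<open>E\<^sub>\<sigma>(u) = \<Sum>\<^sub>v b(u,v) \<sigma>(u,v)\<^sup>2\<close>. A measure \<open>m\<close> with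
  \<open>m(X) \<le> 1\<close> making \<open>\<sigma>\<close> intrinsic exists iff \<open>\<Sum>\<^sub>u E\<^sub>\<sigma>(u) / 2 \<le> 1\<close>, the minimal choice being
  \<open>m = E\<^sub>\<sigma> / 2\<close>. Without killing term the energy of \<open>f\<close> is exactly \<open>\<Sum>\<^sub>u E\<^sub>\<sigma>(u) / 2\<close> for
  \<open>\<sigma>(u,v) = |f(u) - f(v)|\<close>. Conversely, for an admissible \<open>\<sigma>\<close> the function \<open>f = \<sigma>(x,\<cdot>)\<close> is
  1-Lipschitz with respect to \<open>\<sigma>\<close>, hence has energy at most 1, and \<open>|f(x) - f(y)| = \<sigma>(x,y)\<close>.
  So the two sets of values \<open>|f(x) - f(y)|\<close> and \<open>\<sigma>(x,y)\<close> coincide.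
\<close>

definition energy_at :: "('a \<Rightarrow> 'a \<Rightarrow> real) \<Rightarrow> ('a \<Rightarrow> 'a \<Rightarrow> real) \<Rightarrow> 'a \<Rightarrow> ennreal" where
  "energy_at b \<sigma> u = (\<Sum>\<^sub>\<infinity>v\<in>UNIV. ennreal (b u v * (\<sigma> u v)\<^sup>2))"

definition diff_metric :: "('a \<Rightarrow> complex) \<Rightarrow> 'a \<Rightarrow> 'a \<Rightarrow> real" where
  "diff_metric f u v = cmod (f u - f v)"

lemma sum_le_infsum_ennreal:
  fixes g :: "'a \<Rightarrow> ennreal"
  assumes "finite F" and "F \<subseteq> A"
  shows "sum g F \<le> infsum g A"
  using infsum_mono_neutral[of g F g A] assms by (auto simp: nonneg_summable_on_complete)

lemma infsum_Sigma_ennreal: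
  fixes f :: "'a \<Rightarrow> 'b \<Rightarrow> ennreal"
  shows "(\<Sum>\<^sub>\<infinity>(x,y)\<in>UNIV. f x y) = (\<Sum>\<^sub>\<infinity>x\<in>UNIV. \<Sum>\<^sub>\<infinity>y\<in>UNIV. f x y)"
proof (rule antisym)
  let ?p = "\<lambda>(x,y). f x y"
  show "(\<Sum>\<^sub>\<infinity>(x,y)\<in>UNIV. f x y) \<le> (\<Sum>\<^sub>\<infinity>x\<in>UNIV. \<Sum>\<^sub>\<infinity>y\<in>UNIV. f x y)"
  proof (rule infsum_le_finite_sums)
    fix F :: "('a \<times> 'b) set" assume F: "finite F" "F \<subseteq> UNIV"
    have "sum ?p F \<le> sum ?p (fst ` F \<times> snd ` F)"
      by (rule sum_mono2) (use F in force)+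
    also have "\<dots> = (\<Sum>x\<in>fst ` F. \<Sum>y\<in>snd ` F. f x y)"
      by (simp add: sum.cartesian_product)
    also have "\<dots> \<le> (\<Sum>x\<in>fst ` F. \<Sum>\<^sub>\<infinity>y\<in>UNIV. f x y)"
      by (intro sum_mono sum_le_infsum_ennreal) (use F in auto)
    also have "\<dots> \<le> (\<Sum>\<^sub>\<infinity>x\<in>UNIV. \<Sum>\<^sub>\<infinity>y\<in>UNIV. f x y)"
      by (intro sum_le_infsum_ennreal) (use F in auto)
    finally show "sum ?p F \<le> (\<Sum>\<^sub>\<infinity>x\<in>UNIV. \<Sum>\<^sub>\<infinity>y\<in>UNIV. f x y)" .
  qed (simp add: nonneg_summable_on_complete)
  show "(\<Sum>\<^sub>\<infinity>x\<in>UNIV. \<Sum>\<^sub>\<infinity>y\<in>UNIV. f x y) \<le> (\<Sum>\<^sub>\<infinity>(x,y)\<in>UNIV. f x y)"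
  proof (rule infsum_le_finite_sums)
    fix X :: "'a set" assume X: "finite X" "X \<subseteq> UNIV"
    have row: "(\<Sum>\<^sub>\<infinity>y\<in>UNIV. f x y) = infsum ?p (Pair x ` UNIV)" for x
      by (subst infsum_reindex) (auto simp: inj_on_def o_def)
    have "(\<Sum>x\<in>X. \<Sum>\<^sub>\<infinity>y\<in>UNIV. f x y) = infsum ?p (\<Union>x\<in>X. Pair x ` UNIV)"
      unfolding row by (rule sum_infsum) (use X in \<open>auto simp: nonneg_summable_on_complete\<close>)
    also have "\<dots> \<le> infsum ?p UNIV"
      by (rule infsum_mono_neutral) (auto simp: nonneg_summable_on_complete)
    finally show "(\<Sum>x\<in>X. \<Sum>\<^sub>\<infinity>y\<in>UNIV. f x y) \<le> (\<Sum>\<^sub>\<infinity>(x,y)\<in>UNIV. f x y)" by simp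
  qed (simp add: nonneg_summable_on_complete)
qed

lemma infsum_cmult_ennreal:
  fixes f :: "'a \<Rightarrow> ennreal"
  assumes "c < top"
  shows "(\<Sum>\<^sub>\<infinity>x\<in>A. c * f x) = c * infsum f A"
proof (rule infsumI)
  have "((\<lambda>F. c * sum f F) \<longlongrightarrow> c * infsum f A) (finite_subsets_at_top A)"
    using ennreal_tendsto_cmult[OF assms] has_sum_infsum[of f A] unfolding has_sum_def
    by (simp add: nonneg_summable_on_complete)
  then show "((\<lambda>x. c * f x) has_sum c * infsum f A) A"
    unfolding has_sum_def by (simp add: sum_distrib_left)
qed

lemma infsum_divide_ennreal:
  fixes f :: "'a \<Rightarrow> ennreal"
  assumes "c \<noteq> 0"
  shows "(\<Sum>\<^sub>\<infinity>x\<in>A. f x / c) = infsum f A / c"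
proof -
  have "inverse c < top"
    using assms by (simp add: top.not_eq_extremum[symmetric])
  then show ?thesis
    using infsum_cmult_ennreal[of "inverse c" f A] by (simp add: divide_ennreal_def mult.commute)
qed

lemma pseudometric_diff_metric: "pseudometric (diff_metric f)"
  unfolding pseudometric_def diff_metric_def
  by (auto simp: norm_minus_commute intro: norm_diff_triangle_le)

lemma diff_metric_of_real:
  "diff_metric (\<lambda>u. complex_of_real (g u)) u v = \<bar>g u - g v\<bar>"
  unfolding diff_metric_def by (simp flip: of_real_diff)

lemma pseudometric_Lipschitz:
  assumes "pseudometric \<sigma>"
  shows "\<bar>\<sigma> x u - \<sigma> x v\<bar> \<le> \<sigma> u v"
proof -
  have "\<sigma> x u \<le> \<sigma> x v + \<sigma> v u" "\<sigma> x v \<le> \<sigma> x u + \<sigma> u v" "\<sigma> v u = \<sigma> u v"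
    using assms unfolding pseudometric_def by blast+
  then show ?thesis by linarith
qed

lemma energy_at_mono:
  assumes "\<And>v. 0 \<le> b u v" and "\<And>v. \<bar>\<tau> u v\<bar> \<le> \<sigma> u v"
  shows "energy_at b \<tau> u \<le> energy_at b \<sigma> u"
  unfolding energy_at_def
proof (rule infsum_mono)
  fix v
  have "(\<tau> u v)\<^sup>2 \<le> (\<sigma> u v)\<^sup>2"
    using power_mono[OF assms(2)[of v] abs_ge_zero, of 2] by simp
  then show "ennreal (b u v * (\<tau> u v)\<^sup>2) \<le> ennreal (b u v * (\<sigma> u v)\<^sup>2)"
    using assms(1)[of v] by (intro ennreal_leI mult_left_mono)
qed (auto simp: nonneg_summable_on_complete)

lemma Qt_eq_total_energy:
  assumes "\<forall>x. c x = 0"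
  shows "Qt b c f = (\<Sum>\<^sub>\<infinity>u\<in>UNIV. energy_at b (diff_metric f) u) / 2"
proof -
  have "(\<Sum>\<^sub>\<infinity>x\<in>UNIV. ennreal (c x * (cmod (f x))\<^sup>2)) = 0"
    using assms by simp
  then show ?thesis
    unfolding Qt_def energy_at_def diff_metric_def infsum_Sigma_ennreal by simp
qed

lemma ex_intrinsic_measure_iff:
  "(\<exists>m. is_measure_fn m \<and> total_mass m \<le> 1 \<and> intrinsic b \<sigma> m)
     \<longleftrightarrow> (\<Sum>\<^sub>\<infinity>u\<in>UNIV. energy_at b \<sigma> u) / 2 \<le> 1"
proof
  assume "\<exists>m. is_measure_fn m \<and> total_mass m \<le> 1 \<and> intrinsic b \<sigma> m"
  then obtain m where mass: "total_mass m \<le> 1" and intr: "intrinsic b \<sigma> m" by blast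
  have "(\<Sum>\<^sub>\<infinity>u\<in>UNIV. energy_at b \<sigma> u) / 2 = (\<Sum>\<^sub>\<infinity>u\<in>UNIV. energy_at b \<sigma> u / 2)"
    by (simp add: infsum_divide_ennreal)
  also have "\<dots> \<le> total_mass m"
    using intr unfolding intrinsic_def total_mass_def energy_at_def
    by (intro infsum_mono) (auto simp: nonneg_summable_on_complete)
  finally show "(\<Sum>\<^sub>\<infinity>u\<in>UNIV. energy_at b \<sigma> u) / 2 \<le> 1" using mass by simp
next
  assume total: "(\<Sum>\<^sub>\<infinity>u\<in>UNIV. energy_at b \<sigma> u) / 2 \<le> 1"
  define m where "m u = enn2real (energy_at b \<sigma> u) / 2" for u
  have finite: "energy_at b \<sigma> u < top" for u
  proof -
    have "energy_at b \<sigma> u \<le> (\<Sum>\<^sub>\<infinity>u\<in>UNIV. energy_at b \<sigma> u)"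
      using sum_le_infsum_ennreal[of "{u}" UNIV "energy_at b \<sigma>"] by simp
    then have "energy_at b \<sigma> u / 2 < top"
      using total ennreal_one_less_top divide_right_mono_ennreal
      by (meson order_le_less_trans order_trans)
    then show ?thesis
      by (simp add: ennreal_divide_eq_top_iff top.not_eq_extremum[symmetric])
  qed
  have m: "ennreal (m u) = energy_at b \<sigma> u / 2" for u
  proof -
    have "ennreal (m u) = ennreal (enn2real (energy_at b \<sigma> u)) / 2"
      unfolding m_def by (simp add: ennreal_divide_numeral)
    then show ?thesis
      using finite[of u] by simp
  qed
  have "is_measure_fn m"
    unfolding is_measure_fn_def m_def by simp
  moreover have "total_mass m \<le> 1"
    using total unfolding total_mass_def m by (simp add: infsum_divide_ennreal)
  moreover have "intrinsic b \<sigma> m"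
    unfolding intrinsic_def m energy_at_def by simp
  ultimately show "\<exists>m. is_measure_fn m \<and> total_mass m \<le> 1 \<and> intrinsic b \<sigma> m" by blast
qed

lemma Qt_distance_function_le:
  assumes "weighted_graph b c" and "\<forall>x. c x = 0" and "pseudometric \<sigma>"
  shows "Qt b c (\<lambda>u. complex_of_real (\<sigma> x u)) \<le> (\<Sum>\<^sub>\<infinity>u\<in>UNIV. energy_at b \<sigma> u) / 2"
proof -
  have "energy_at b (diff_metric (\<lambda>u. complex_of_real (\<sigma> x u))) u \<le> energy_at b \<sigma> u" for u
    using assms(1) pseudometric_Lipschitz[OF assms(3)]
    by (intro energy_at_mono) (auto simp: weighted_graph_def diff_metric_of_real)
  then show ?thesis
    unfolding Qt_eq_total_energy[OF assms(2)]
    by (intro divide_right_mono_ennreal infsum_mono) (auto simp: nonneg_summable_on_complete)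
qed

lemma distance_attained_by_energy_function:
  assumes "weighted_graph b c" and "\<forall>x. c x = 0" and "pseudometric \<sigma>"
    and total: "(\<Sum>\<^sub>\<infinity>u\<in>UNIV. energy_at b \<sigma> u) / 2 \<le> 1"
  shows "\<exists>f. f \<in> Dt b c \<and> Qt b c f \<le> 1 \<and> cmod (f x - f y) = \<sigma> x y"
proof -
  define f where "f u = complex_of_real (\<sigma> x u)" for u
  have energy: "Qt b c f \<le> 1"
    using Qt_distance_function_le[OF assms(1-3)] total unfolding f_def by (rule order_trans)
  then have "f \<in> Dt b c"
    unfolding Dt_def infinity_ennreal_def using ennreal_one_less_top
    by (auto intro: order_le_less_trans)
  moreover have "cmod (f x - f y) = \<sigma> x y"
    using assms(3) diff_metric_of_real[of "\<sigma> x" x y]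
    unfolding pseudometric_def diff_metric_def f_def by simp
  ultimately show ?thesis
    using energy by blast
qed

theorem mainTheorem4:
  fixes b :: "'a \<Rightarrow> 'a \<Rightarrow> real" and c :: "'a \<Rightarrow> real"
  assumes "countable (UNIV :: 'a set)" and "infinite (UNIV :: 'a set)"
    and "weighted_graph b c" and "connected_graph b" and "\<forall>x. c x = 0"
  shows "\<forall>x y. rho b c x y =
           Sup {ereal (\<sigma> x y) | \<sigma>. pseudometric \<sigma> \<and>
                 (\<exists>m. is_measure_fn m \<and> total_mass m \<le> 1 \<and> intrinsic b \<sigma> m)}"
proof (intro allI)
  fix x y
  have "{ereal (cmod (f x - f y)) | f. f \<in> Dt b c \<and> Qt b c f \<le> 1} =
        {ereal (\<sigma> x y) | \<sigma>. pseudometric \<sigma> \<and>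
           (\<exists>m. is_measure_fn m \<and> total_mass m \<le> 1 \<and> intrinsic b \<sigma> m)}"
    (is "?values = ?distances")
  proof (intro equalityI subsetI)
    fix z assume "z \<in> ?values"
    then obtain f where "z = ereal (diff_metric f x y)" and "Qt b c f \<le> 1"
      by (auto simp: diff_metric_def)
    then show "z \<in> ?distances"
      using pseudometric_diff_metric Qt_eq_total_energy[OF assms(5)]
      by (auto simp: ex_intrinsic_measure_iff)
  next
    fix z assume "z \<in> ?distances"
    then obtain \<sigma> where "z = ereal (\<sigma> x y)" and "pseudometric \<sigma>"
      and "(\<Sum>\<^sub>\<infinity>u\<in>UNIV. energy_at b \<sigma> u) / 2 \<le> 1"
      by (auto simp: ex_intrinsic_measure_iff)
    then show "z \<in> ?values"
      using distance_attained_by_energy_function[OF assms(3,5), of \<sigma> x y] by force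
  qed
  then show "rho b c x y = Sup ?distances"
    unfolding rho_def by simp
qed

end
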